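(* Fix integers $d, d_z, d_w \ge 1$ and $K \ge 1$. Let the data distribution be $p_{\text{data}}(x) = \prod_{i=1}^d \mu_{x,i}^{x_i}(1-\mu_{x,i})^{1-x_i}$ on $x \in \{0,1\}^d$ (product Bernoulli), for a fixed vector $\mu_x \in (0,1)^d$. Consider the single-class ($C=1$) GMVAE loss $-\mathbb{E}_{x\sim p_{\text{data}}}[\mathcal{L}(K)]$ defined in the context, minimized over all choices of the (measurable) functions $\mu(\cdot;\phi_z),\sigma^2(\cdot;\phi_z)$, $\mu(\cdot;\phi_w),\sigma^2(\cdot;\phi_w)$, $\mu_k(\cdot;\beta),\sigma_k^2(\cdot;\beta)$ ($k=1,\dots,K$), and $\mu(\cdot;\theta)$ (variances strictly positive, decoder means in $(0,1)^d$). Then for every $K\ge 1$, $$\min\; -\mathbb{E}_{x\sim p_{\text{data}}}[\mathcal{L}(K)] = -\mathbb{E}_{x\sim p_{\text{data}}}[\log p_{\text{data}}(x)],$$ so the optimal loss does not depend on $K$. Moreover, for any constant vectors $\mu_z\in\mathbb{R}^{d_z}$ and $\sigma_z\in(0,\infty)^{d_z}$, a global minimizer is given by: $\mu(x;\phi_z)=\mu_z$, $\sigma^2(x;\phi_z)=\sigma_z^2$ for all $x$; $\mu_k(w;\beta)=\mu_z$, $\sigma_k^2(w;\beta)=\sigma_z^2$ for all $k$ and $w$; $\mu(x;\phi_w)=\vec 0$, $\sigma^2(x;\phi_w)=\vec 1$ for all $x$; and $\mu(z;\theta)=\mu_x$ for all $z$.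
   Context: Single-class GMVAE with $K$ subclusters. Generative model: $w\sim\mathcal N(0,I_{d_w})$; $v\in\{1,\dots,K\}$ uniform, $p(v=j)=1/K$; $z\mid w,v=j \sim \mathcal N(\mu_j(w;\beta),\operatorname{diag}\sigma_j^2(w;\beta))$ on $\mathbb R^{d_z}$; $x\mid z\sim$ product Bernoulli with mean vector $\mu(z;\theta)$, i.e. $p_\theta(x|z)=\prod_i \mu(z;\theta)_i^{x_i}(1-\mu(z;\theta)_i)^{1-x_i}$. Recognition model: $q_{\phi_z}(z|x)=\mathcal N(\mu(x;\phi_z),\operatorname{diag}\sigma^2(x;\phi_z))$, $q_{\phi_w}(w|x)=\mathcal N(\mu(x;\phi_w),\operatorname{diag}\sigma^2(x;\phi_w))$, and $p_\beta(v=j|z,w)=\frac{p_\beta(z|w,v=j)p(v=j)}{\sum_{j'}p_\beta(z|w,v=j')p(v=j')}$. The ELBO is $\mathcal L(K)=\mathbb E_{q_{\phi_z}(z|x)}[\log p_\theta(x|z)] - \mathbb E_{q_{\phi_w}(w|x)q_{\phi_z}(z|x)}\big[\log q_{\phi_z}(z|x)-\sum_{j=1}^K p_\beta(v=j|z,w)\log p_\beta(z|w,v=j)\big] - \mathrm{KL}(q_{\phi_w}(w|x)\,\|\,p(w)) - \mathbb E_{q_{\phi_w}(w|x)q_{\phi_z}(z|x)}\big[\mathrm{KL}(p_\beta(v|z,w)\,\|\,p(v))\big]$, and the loss is $-\mathbb E_{x\sim p_{\text{data}}}[\mathcal L(K)]$. (The paper assumes the neural networks are expressive enough to realize the functions considered;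 here the minimization is taken over all such functions.) *)

theory Defs
  imports "HOL-Probability.Probability"
begin

text \<open>Data points x are elements of {0,1}^d, represented as Boolean vectors indexed by a
finite type 'd (x i = True means x_i = 1).\<close>

definition bern :: "real^'d \<Rightarrow> ('d::finite \<Rightarrow> bool) \<Rightarrow> real" where
  "bern mu x = (\<Prod>i\<in>UNIV. (mu$i) ^ (if x i then 1 else 0) * (1 - mu$i) ^ (if x i then 0 else 1))"

definition gauss_diag :: "real^'n \<Rightarrow> real^'n \<Rightarrow> real^'n::finite \<Rightarrow> real" where
  "gauss_diag m s2 z = (\<Prod>i\<in>UNIV. normal_density (m$i) (sqrt (s2$i)) (z$i))"

text \<open>Posterior p_beta(v=j | z, w) with uniform prior p(v=j) = 1/K, clusters j = 0..K-1.\<close>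
definition post_v :: "nat \<Rightarrow> (nat \<Rightarrow> real^'w::finite \<Rightarrow> real^'z::finite) \<Rightarrow> (nat \<Rightarrow> real^'w \<Rightarrow> real^'z)
    \<Rightarrow> nat \<Rightarrow> real^'z \<Rightarrow> real^'w \<Rightarrow> real" where
  "post_v K mb sb j z w =
     gauss_diag (mb j w) (sb j w) z * (1 / real K) /
     (\<Sum>j'<K. gauss_diag (mb j' w) (sb j' w) z * (1 / real K))"

text \<open>The four integrands of the ELBO L(K) for a fixed data point x.
 mz, sz: encoder mean/variance for z; mw, sw: encoder mean/variance for w;
 mb j, sb j: prior mean/variance of z given w, v=j; dec: decoder Bernoulli mean.\<close>

definition elbo_int1 where
  "elbo_int1 (mz :: ('d::finite \<Rightarrow> bool) \<Rightarrow> real^'z::finite) sz (dec :: real^'z \<Rightarrow> real^'d) x =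
     (\<lambda>z. gauss_diag (mz x) (sz x) z * ln (bern (dec z) x))"

definition elbo_int2 where
  "elbo_int2 K (mz :: ('d::finite \<Rightarrow> bool) \<Rightarrow> real^'z::finite) sz
       (mw :: ('d \<Rightarrow> bool) \<Rightarrow> real^'w::finite) sw mb sb x =
     (\<lambda>(w, z). gauss_diag (mw x) (sw x) w * gauss_diag (mz x) (sz x) z *
        (ln (gauss_diag (mz x) (sz x) z)
         - (\<Sum>j<K. post_v K mb sb j z w * ln (gauss_diag (mb j w) (sb j w) z))))"

definition elbo_int3 where
  "elbo_int3 (mw :: ('d::finite \<Rightarrow> bool) \<Rightarrow> real^'w::finite) sw x =
     (\<lambda>w. gauss_diag (mw x) (sw x) w * ln (gauss_diag (mw x) (sw x) w / gauss_diag 0 1 w))"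

definition elbo_int4 where
  "elbo_int4 K (mz :: ('d::finite \<Rightarrow> bool) \<Rightarrow> real^'z::finite) sz
       (mw :: ('d \<Rightarrow> bool) \<Rightarrow> real^'w::finite) sw mb sb x =
     (\<lambda>(w, z). gauss_diag (mw x) (sw x) w * gauss_diag (mz x) (sz x) z *
        (\<Sum>j<K. post_v K mb sb j z w * ln (post_v K mb sb j z w / (1 / real K))))"

text \<open>ELBO L(K) at data point x:
  E_q[log p(x|z)] - E[log q(z|x) - sum_j p(v=j|z,w) log p(z|w,v=j)] - KL(q(w|x)||p(w))
  - E[KL(p(v|z,w) || p(v))].\<close>
definition elbo where
  "elbo K mz sz mw sw mb sb dec x =
     integral\<^sup>L lborel (elbo_int1 mz sz dec x)
   - integral\<^sup>L lborel (elbo_int2 K mz sz mw sw mb sb x)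
   - integral\<^sup>L lborel (elbo_int3 mw sw x)
   - integral\<^sup>L lborel (elbo_int4 K mz sz mw sw mb sb x)"

definition gmvae_loss where
  "gmvae_loss (mux :: real^'d::finite) K mz sz mw sw mb sb dec =
     - (\<Sum>x\<in>UNIV. bern mux x * elbo K mz sz mw sw mb sb dec x)"

definition gmvae_admissible where
  "gmvae_admissible K (mz :: ('d::finite \<Rightarrow> bool) \<Rightarrow> real^'z::finite) sz
       (mw :: ('d \<Rightarrow> bool) \<Rightarrow> real^'w::finite) sw
       (mb :: nat \<Rightarrow> real^'w \<Rightarrow> real^'z) sb (dec :: real^'z \<Rightarrow> real^'d) \<longleftrightarrow>
     (\<forall>x i. 0 < sz x $ i) \<and> (\<forall>x i. 0 < sw x $ i) \<and>
     (\<forall>j<K. \<forall>w i. 0 < sb j w $ i) \<and>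
     (\<forall>z i. 0 < dec z $ i \<and> dec z $ i < 1) \<and>
     (\<forall>j<K. mb j \<in> borel_measurable borel \<and> sb j \<in> borel_measurable borel) \<and>
     dec \<in> borel_measurable borel"

definition gmvae_loss_defined where
  "gmvae_loss_defined K (mz :: ('d::finite \<Rightarrow> bool) \<Rightarrow> real^'z::finite) sz
       (mw :: ('d \<Rightarrow> bool) \<Rightarrow> real^'w::finite) sw mb sb (dec :: real^'z \<Rightarrow> real^'d) \<longleftrightarrow>
     (\<forall>x. integrable lborel (elbo_int1 mz sz dec x) \<and>
          integrable lborel (elbo_int2 K mz sz mw sw mb sb x) \<and>
          integrable lborel (elbo_int3 mw sw x) \<and>
          integrable lborel (elbo_int4 K mz sz mw sw mb sb x))"

end

theory Submission
  imports Defs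
begin

text \<open>For a data point x the ELBO is E_q[ln (p(x,w,z) / q(w,z|x))], where q is the recognition
density and p(x,w,z) the generative joint density with the cluster v summed out: the
posterior-weighted terms collapse because
\<Sum>_j p(v=j|z,w) (ln p(z|w,v=j) - ln (K p(v=j|z,w))) = ln p(z|w).
Applying ln y \<le> y - 1 to y = p(x,w,z) / (q(w,z|x) p_data(x)) gives
p_data(x) (L(x) - ln p_data(x)) \<le> \<integral>p(x,w,z) - p_data(x). Summed over x, the joint densities add
up to the prior density p(w,z), which integrates to 1, so the loss is at least the entropy of
p_data. For the proposed minimiser the decoder ignores z, q(w|x) is the prior of w and all
clusters coincide, so every KL term vanishes and L(x) = ln p_data(x).\<close>

lemma borel_measurable_vec_nth_comp[measurable (raw)]:
  "f \<in> borel_measurable M \<Longrightarrow> (\<lambda>x. f x $ i :: real) \<in> borel_measurable M"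
  using measurable_compose[OF _ borel_measurable_nth] by blast

lemma gauss_diag_nonneg: "0 \<le> gauss_diag m s z"
  unfolding gauss_diag_def by (intro prod_nonneg) auto

lemma gauss_diag_pos: "\<forall>i. 0 < s $ i \<Longrightarrow> 0 < gauss_diag m s z"
  unfolding gauss_diag_def by (intro prod_pos) (auto intro!: normal_density_pos)

lemma borel_measurable_gauss_diag[measurable (raw)]:
  assumes "f \<in> borel_measurable M" "g \<in> borel_measurable M" "h \<in> borel_measurable M"
  shows "(\<lambda>x. gauss_diag (f x) (g x) (h x)) \<in> borel_measurable M"
  unfolding gauss_diag_def normal_density_def using assms by measurable

lemma nn_integral_gauss_diag:
  fixes m s :: "real^'n::finite"
  assumes "\<forall>i. 0 < s $ i"
  shows "(\<integral>\<^sup>+z. gauss_diag m s z \<partial>lborel) = 1"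
proof -
  define f where "f b = normal_density (m \<bullet> b) (sqrt (s \<bullet> b))" for b :: "real^'n"
  have Basis_eq: "(Basis :: (real^'n) set) = range (\<lambda>i. axis i 1)"
    unfolding Basis_vec_def by auto
  have "gauss_diag m s z = (\<Prod>b\<in>Basis. f b (z \<bullet> b))" for z
  proof -
    have "(\<Prod>b\<in>Basis. f b (z \<bullet> b)) = (\<Prod>i\<in>UNIV. f (axis i 1) (z \<bullet> axis i 1))"
      unfolding Basis_eq by (subst prod.reindex) (auto simp: inj_on_def axis_eq_axis)
    then show ?thesis by (simp add: gauss_diag_def f_def inner_axis)
  qed
  then have "(\<integral>\<^sup>+z. gauss_diag m s z \<partial>lborel) = (\<integral>\<^sup>+z. (\<Prod>b\<in>Basis. ennreal (f b (z \<bullet> b))) \<partial>lborel)"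
    by (simp add: prod_ennreal f_def)
  also have "\<dots> = (\<Prod>b\<in>Basis. \<integral>\<^sup>+x. f b x \<partial>lborel)"
    by (rule nn_integral_lborel_prod) (auto simp: f_def)
  also have "\<dots> = (\<Prod>b\<in>(Basis :: (real^'n) set). 1)"
  proof (rule prod.cong[OF refl])
    fix b :: "real^'n" assume "b \<in> Basis"
    then have "0 < sqrt (s \<bullet> b)" using assms by (auto simp: Basis_vec_def inner_axis)
    then show "(\<integral>\<^sup>+x. f b x \<partial>lborel) = 1"
      unfolding f_def by (subst nn_integral_eq_integral) auto
  qed
  finally show ?thesis by simp
qed

lemma integrable_gauss_diag:
  fixes m s :: "real^'n::finite"
  assumes "\<forall>i. 0 < s $ i"
  shows "integrable lborel (gauss_diag m s)"
  by (rule integrableI_nonneg) (auto simp: gauss_diag_nonneg nn_integral_gauss_diag[OF assms])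

lemma integral_gauss_diag:
  fixes m s :: "real^'n::finite"
  assumes "\<forall>i. 0 < s $ i"
  shows "integral\<^sup>L lborel (gauss_diag m s) = 1"
proof -
  have "ennreal (integral\<^sup>L lborel (gauss_diag m s)) = 1"
    using nn_integral_gauss_diag[OF assms] integrable_gauss_diag[OF assms]
    by (subst nn_integral_eq_integral[symmetric]) (auto simp: gauss_diag_nonneg)
  then show ?thesis by simp
qed

lemma borel_measurable_bern[measurable (raw)]:
  "f \<in> borel_measurable M \<Longrightarrow> (\<lambda>z. bern (f z) x) \<in> borel_measurable M"
  unfolding bern_def by (intro borel_measurable_prod) (simp split: if_split)

lemma bern_pos: "\<forall>i. 0 < mu $ i \<and> mu $ i < 1 \<Longrightarrow> 0 < bern mu x"
  unfolding bern_def by (intro prod_pos) auto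

lemma bern_le_1: "\<forall>i. 0 < mu $ i \<and> mu $ i < 1 \<Longrightarrow> bern mu x \<le> 1"
  unfolding bern_def by (intro prod_le_1) (auto simp: less_imp_le)

lemma sum_bern: "(\<Sum>x\<in>UNIV. bern mu x) = 1"
proof -
  have "(\<Sum>x\<in>UNIV. bern mu x)
      = (\<Prod>i\<in>UNIV. \<Sum>b\<in>UNIV. (mu$i) ^ (if b then 1 else 0) * (1 - mu$i) ^ (if b then 0 else 1))"
    unfolding bern_def by (subst prod_sum_PiE) auto
  also have "\<dots> = 1"
    by (simp add: UNIV_bool)
  finally show ?thesis .
qed

lemma (in pair_sigma_finite) integrable_product_mult:
  fixes f :: "'a \<Rightarrow> real" and g :: "'b \<Rightarrow> real"
  assumes f: "integrable M1 f" and g: "integrable M2 g"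
  shows "integrable (M1 \<Otimes>\<^sub>M M2) (\<lambda>(x, y). f x * g y)"
proof (rule integrableI_bounded)
  have [measurable]: "f \<in> borel_measurable M1" "g \<in> borel_measurable M2" using f g by auto
  show "(\<lambda>(x, y). f x * g y) \<in> borel_measurable (M1 \<Otimes>\<^sub>M M2)" by measurable
  have "(\<integral>\<^sup>+p. ennreal (norm ((\<lambda>(x, y). f x * g y) p)) \<partial>(M1 \<Otimes>\<^sub>M M2))
      = (\<integral>\<^sup>+x. \<integral>\<^sup>+y. ennreal (norm (f x)) * ennreal (norm (g y)) \<partial>M2 \<partial>M1)"
    by (subst M2.nn_integral_fst[symmetric]) (auto simp: abs_mult ennreal_mult)
  also have "\<dots> = (\<integral>\<^sup>+x. norm (f x) \<partial>M1) * (\<integral>\<^sup>+y. norm (g y) \<partial>M2)"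
    by (simp add: nn_integral_cmult nn_integral_multc)
  also have "\<dots> < \<infinity>"
    using f g by (auto simp: integrable_iff_bounded ennreal_mult_less_top)
  finally show "(\<integral>\<^sup>+p. ennreal (norm ((\<lambda>(x, y). f x * g y) p)) \<partial>(M1 \<Otimes>\<^sub>M M2)) < \<infinity>" .
qed

lemma (in pair_sigma_finite) integral_product_mult:
  fixes f :: "'a \<Rightarrow> real" and g :: "'b \<Rightarrow> real"
  assumes "integrable M1 f" and "integrable M2 g"
  shows "integral\<^sup>L (M1 \<Otimes>\<^sub>M M2) (\<lambda>(x, y). f x * g y) = integral\<^sup>L M1 f * integral\<^sup>L M2 g"
  using integral_fst'[OF integrable_product_mult[OF assms]] by simp

lemma integral_mult_ln_ratio_le:
  fixes q A :: "'a \<Rightarrow> real"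
  assumes q: "integrable M q" "integral\<^sup>L M q = 1" and A: "integrable M A"
    and qA: "integrable M (\<lambda>x. q x * ln (A x / q x))"
    and pos: "\<And>x. 0 < q x" "\<And>x. 0 < A x" and c: "0 < c"
  shows "(\<integral>x. q x * ln (A x / q x) \<partial>M) \<le> ln c + integral\<^sup>L M A / c - 1"
proof -
  have "q x * ln (A x / q x) - ln c * q x \<le> A x / c - q x" for x
  proof -
    have "q x * ln (A x / q x) - ln c * q x = q x * ln (A x / (q x * c))"
      using pos[of x] c by (simp add: ln_div ln_mult algebra_simps)
    also have "\<dots> \<le> q x * (A x / (q x * c) - 1)"
      using pos[of x] c by (intro mult_left_mono ln_le_minus_one) auto
    also have "\<dots> = A x / c - q x"
      using pos[of x] c by (simp add: field_simps)
    finally show ?thesis .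
  qed
  then have "(\<integral>x. q x * ln (A x / q x) - ln c * q x \<partial>M) \<le> (\<integral>x. A x / c - q x \<partial>M)"
    using q A qA by (intro integral_mono) auto
  then show ?thesis
    using q A qA by simp
qed

definition gmvae_prior_density ::
    "nat \<Rightarrow> (nat \<Rightarrow> real^'w::finite \<Rightarrow> real^'z::finite) \<Rightarrow> (nat \<Rightarrow> real^'w \<Rightarrow> real^'z)
      \<Rightarrow> (real^'w) \<times> (real^'z) \<Rightarrow> real" where
  "gmvae_prior_density K mb sb =
     (\<lambda>(w, z). gauss_diag 0 1 w * (\<Sum>j<K. gauss_diag (mb j w) (sb j w) z) / real K)"

definition gmvae_joint_density where
  "gmvae_joint_density K mb sb (dec :: real^'z::finite \<Rightarrow> real^'d::finite) x q =
     bern (dec (snd q)) x * gmvae_prior_density K mb sb q"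

definition recognition_density where
  "recognition_density (mz :: ('d::finite \<Rightarrow> bool) \<Rightarrow> real^'z::finite) sz
       (mw :: ('d \<Rightarrow> bool) \<Rightarrow> real^'w::finite) sw x =
     (\<lambda>(w, z). gauss_diag (mw x) (sw x) w * gauss_diag (mz x) (sz x) z)"

lemma gmvae_prior_density_pos:
  assumes "1 \<le> K" "\<forall>j<K. \<forall>w i. 0 < sb j w $ i"
  shows "0 < gmvae_prior_density K mb sb q"
proof -
  obtain w z where q: "q = (w, z)" by (cases q)
  have "0 < gauss_diag (mb 0 w) (sb 0 w) z"
    using assms by (intro gauss_diag_pos) auto
  also have "\<dots> \<le> (\<Sum>j<K. gauss_diag (mb j w) (sb j w) z)"
    using assms(1) by (intro member_le_sum) (auto simp: gauss_diag_nonneg)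
  finally show ?thesis
    using assms(1) by (simp add: gmvae_prior_density_def q gauss_diag_pos)
qed

lemma borel_measurable_gmvae_prior_density:
  assumes "\<forall>j<K. mb j \<in> borel_measurable borel \<and> sb j \<in> borel_measurable borel"
  shows "gmvae_prior_density K mb sb \<in> borel_measurable borel"
proof -
  have "(\<lambda>q. gauss_diag (mb j (fst q)) (sb j (fst q)) (snd q)) \<in> borel_measurable (borel \<Otimes>\<^sub>M borel)"
    if "j < K" for j
  proof -
    have [measurable]: "mb j \<in> borel_measurable borel" "sb j \<in> borel_measurable borel"
      using assms that by auto
    show ?thesis by measurable
  qed
  then show ?thesis
    unfolding gmvae_prior_density_def case_prod_beta' borel_prod[symmetric] by measurable
qed

lemma nn_integral_gmvae_prior_density:
  fixes mb :: "nat \<Rightarrow> real^'w::finite \<Rightarrow> real^'z::finite"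
  assumes K: "1 \<le> K" and pos: "\<forall>j<K. \<forall>w i. 0 < sb j w $ i"
    and meas: "\<forall>j<K. mb j \<in> borel_measurable borel \<and> sb j \<in> borel_measurable borel"
  shows "(\<integral>\<^sup>+q. gmvae_prior_density K mb sb q \<partial>lborel) = 1"
proof -
  have mixture: "(\<integral>\<^sup>+z. (\<Sum>j<K. gauss_diag (mb j w) (sb j w) z) \<partial>lborel) = real K" for w
  proof -
    have "(\<integral>\<^sup>+z. (\<Sum>j<K. gauss_diag (mb j w) (sb j w) z) \<partial>lborel)
        = (\<Sum>j<K. \<integral>\<^sup>+z. gauss_diag (mb j w) (sb j w) z \<partial>lborel)"
      by (subst nn_integral_sum[symmetric]) (auto simp: gauss_diag_nonneg)
    also have "\<dots> = real K"
      using pos by (simp add: nn_integral_gauss_diag ennreal_of_nat_eq_real_of_nat)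
    finally show ?thesis .
  qed
  have [measurable]: "gmvae_prior_density K mb sb \<in> borel_measurable (lborel \<Otimes>\<^sub>M lborel)"
    using borel_measurable_gmvae_prior_density[OF meas] by (simp add: lborel_prod)
  have "(\<integral>\<^sup>+q. gmvae_prior_density K mb sb q \<partial>lborel)
      = (\<integral>\<^sup>+q. gmvae_prior_density K mb sb q \<partial>(lborel \<Otimes>\<^sub>M lborel))"
    by (simp only: lborel_prod)
  also have "\<dots> = (\<integral>\<^sup>+w. \<integral>\<^sup>+z. gmvae_prior_density K mb sb (w, z) \<partial>lborel \<partial>lborel)"
    by (rule lborel.nn_integral_fst[symmetric]) measurable
  also have "\<dots> = (\<integral>\<^sup>+w. \<integral>\<^sup>+z. ennreal (gauss_diag 0 1 w / real K)
            * (\<Sum>j<K. gauss_diag (mb j w) (sb j w) z) \<partial>lborel \<partial>lborel)"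
    by (simp add: gmvae_prior_density_def ennreal_mult[symmetric] gauss_diag_nonneg sum_nonneg)
  also have "\<dots> = (\<integral>\<^sup>+(w :: real^'w). gauss_diag 0 1 w \<partial>lborel)"
    using K by (simp add: nn_integral_cmult mixture ennreal_mult[symmetric] gauss_diag_nonneg)
  also have "\<dots> = 1"
    by (rule nn_integral_gauss_diag) simp
  finally show ?thesis .
qed

lemma gmvae_prior_density_integral:
  fixes mb :: "nat \<Rightarrow> real^'w::finite \<Rightarrow> real^'z::finite"
  assumes "1 \<le> K" "\<forall>j<K. \<forall>w i. 0 < sb j w $ i"
    and "\<forall>j<K. mb j \<in> borel_measurable borel \<and> sb j \<in> borel_measurable borel"
  shows "integrable lborel (gmvae_prior_density K mb sb)"
    and "integral\<^sup>L lborel (gmvae_prior_density K mb sb) = 1"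
proof -
  note nn = nn_integral_gmvae_prior_density[OF assms]
  note nonneg = gmvae_prior_density_pos[OF assms(1,2), THEN less_imp_le]
  show int: "integrable lborel (gmvae_prior_density K mb sb)"
    using borel_measurable_gmvae_prior_density[OF assms(3)] nn nonneg
    by (intro integrableI_nonneg) auto
  have "ennreal (integral\<^sup>L lborel (gmvae_prior_density K mb sb)) = 1"
    using nn int nonneg by (subst nn_integral_eq_integral[symmetric]) auto
  then show "integral\<^sup>L lborel (gmvae_prior_density K mb sb) = 1" by simp
qed

lemma post_v_eq:
  assumes "1 \<le> K"
  shows "post_v K mb sb j z w
    = gauss_diag (mb j w) (sb j w) z / (\<Sum>j'<K. gauss_diag (mb j' w) (sb j' w) z)"
  using assms by (simp add: post_v_def sum_divide_distrib[symmetric])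

lemma sum_post_v_ln:
  assumes K: "1 \<le> K" and pos: "\<forall>j<K. \<forall>w i. 0 < sb j w $ i"
  shows "(\<Sum>j<K. post_v K mb sb j z w * ln (gauss_diag (mb j w) (sb j w) z))
       - (\<Sum>j<K. post_v K mb sb j z w * ln (post_v K mb sb j z w / (1 / real K)))
       = ln ((\<Sum>j<K. gauss_diag (mb j w) (sb j w) z) / real K)"
proof -
  define g where "g j = gauss_diag (mb j w) (sb j w) z" for j
  define S where "S = (\<Sum>j<K. g j)"
  have g: "j < K \<Longrightarrow> 0 < g j" for j
    unfolding g_def using pos by (intro gauss_diag_pos) auto
  have S: "0 < S"
    unfolding S_def using K g by (intro sum_pos) (auto simp: lessThan_empty_iff)
  have post: "post_v K mb sb j z w = g j / S" for j
    unfolding post_v_eq[OF K] g_def S_def ..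
  have "(\<Sum>j<K. post_v K mb sb j z w * ln (g j))
      - (\<Sum>j<K. post_v K mb sb j z w * ln (post_v K mb sb j z w / (1 / real K)))
      = (\<Sum>j<K. g j / S * ln (S / real K))"
    unfolding sum_subtractf[symmetric] post
    using K g S by (intro sum.cong refl) (simp add: ln_div ln_mult field_simps)
  also have "\<dots> = ln (S / real K)"
    using S by (simp add: sum_distrib_right[symmetric] sum_divide_distrib[symmetric] S_def[symmetric])
  finally show ?thesis unfolding g_def S_def .
qed

lemma elbo_integrands_eq:
  assumes K: "1 \<le> K" and adm: "gmvae_admissible K mz sz mw sw mb sb dec"
  shows "gauss_diag (mw x) (sw x) w * elbo_int1 mz sz dec x z - elbo_int2 K mz sz mw sw mb sb x (w, z)
       - elbo_int3 mw sw x w * gauss_diag (mz x) (sz x) z - elbo_int4 K mz sz mw sw mb sb x (w, z)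
       = recognition_density mz sz mw sw x (w, z)
         * ln (gmvae_joint_density K mb sb dec x (w, z) / recognition_density mz sz mw sw x (w, z))"
proof -
  define qw where "qw = gauss_diag (mw x) (sw x) w"
  define qz where "qz = gauss_diag (mz x) (sz x) z"
  define pw where "pw = gauss_diag 0 1 w"
  define px where "px = bern (dec z) x"
  define S where "S = (\<Sum>j<K. gauss_diag (mb j w) (sb j w) z)"
  define r where "r = S / real K"
  have sb: "\<forall>j<K. \<forall>w i. 0 < sb j w $ i"
    using adm by (simp add: gmvae_admissible_def)
  have qw: "0 < qw" and qz: "0 < qz"
    using adm unfolding qw_def qz_def gmvae_admissible_def by (auto intro!: gauss_diag_pos)
  have pw: "0 < pw" and px: "0 < px"
    using adm unfolding pw_def px_def gmvae_admissible_def by (auto intro!: gauss_diag_pos bern_pos)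
  have "0 < pw * r"
    using gmvae_prior_density_pos[OF K sb, of mb "(w, z)"]
    by (simp add: gmvae_prior_density_def pw_def r_def S_def)
  then have r: "0 < r"
    using pw by (simp add: zero_less_mult_iff)
  have rec: "recognition_density mz sz mw sw x (w, z) = qw * qz"
    by (simp add: recognition_density_def qw_def qz_def)
  have joint: "gmvae_joint_density K mb sb dec x (w, z) = px * (pw * r)"
    by (simp add: gmvae_joint_density_def gmvae_prior_density_def pw_def px_def r_def S_def)
  have ln_ratio: "ln (px * (pw * r) / (qw * qz)) = ln px + ln pw + ln r - ln qw - ln qz"
    using qw qz pw px r by (simp add: ln_div ln_mult)
  have int1: "elbo_int1 mz sz dec x z = qz * ln px"
    by (simp add: elbo_int1_def qz_def px_def)
  have "elbo_int2 K mz sz mw sw mb sb x (w, z) + elbo_int4 K mz sz mw sw mb sb x (w, z)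
      = qw * qz * (ln qz
          - ((\<Sum>j<K. post_v K mb sb j z w * ln (gauss_diag (mb j w) (sb j w) z))
             - (\<Sum>j<K. post_v K mb sb j z w * ln (post_v K mb sb j z w / (1 / real K)))))"
    by (simp add: elbo_int2_def elbo_int4_def qw_def qz_def algebra_simps)
  also have "\<dots> = qw * qz * (ln qz - ln r)"
    unfolding sum_post_v_ln[OF K sb] r_def S_def ..
  finally have int24: "elbo_int2 K mz sz mw sw mb sb x (w, z) + elbo_int4 K mz sz mw sw mb sb x (w, z)
      = qw * qz * (ln qz - ln r)" .
  have int3: "elbo_int3 mw sw x w = qw * (ln qw - ln pw)"
    using qw pw by (simp add: elbo_int3_def qw_def pw_def ln_div)
  show ?thesis
    unfolding rec joint ln_ratio int1 int3 qw_def[symmetric] qz_def[symmetric]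
    using int24 by (simp add: algebra_simps)
qed

lemma elbo_eq_integral_ln_ratio:
  fixes mz :: "('d::finite \<Rightarrow> bool) \<Rightarrow> real^'z::finite" and mw :: "('d \<Rightarrow> bool) \<Rightarrow> real^'w::finite"
  assumes K: "1 \<le> K" and adm: "gmvae_admissible K mz sz mw sw mb sb dec"
    and def: "gmvae_loss_defined K mz sz mw sw mb sb dec"
  shows "integrable lborel (\<lambda>q. recognition_density mz sz mw sw x q
            * ln (gmvae_joint_density K mb sb dec x q / recognition_density mz sz mw sw x q))"
    and "elbo K mz sz mw sw mb sb dec x = (\<integral>q. recognition_density mz sz mw sw x q
            * ln (gmvae_joint_density K mb sb dec x q / recognition_density mz sz mw sw x q) \<partial>lborel)"
proof -
  define F where "F q = recognition_density mz sz mw sw x q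
      * ln (gmvae_joint_density K mb sb dec x q / recognition_density mz sz mw sw x q)" for q
  define qw where "qw = gauss_diag (mw x) (sw x)"
  define qz where "qz = gauss_diag (mz x) (sz x)"
  have qw: "integrable lborel qw" "integral\<^sup>L lborel qw = 1"
    and qz: "integrable lborel qz" "integral\<^sup>L lborel qz = 1"
    using adm unfolding qw_def qz_def gmvae_admissible_def
    by (auto intro!: integrable_gauss_diag integral_gauss_diag)
  have i1: "integrable lborel (elbo_int1 mz sz dec x)"
    and i2: "integrable lborel (elbo_int2 K mz sz mw sw mb sb x)"
    and i3: "integrable lborel (elbo_int3 mw sw x)"
    and i4: "integrable lborel (elbo_int4 K mz sz mw sw mb sb x)"
    using def unfolding gmvae_loss_defined_def by auto
  define T1 where "T1 = (\<lambda>(w, z). qw w * elbo_int1 mz sz dec x z)"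
  define T3 where "T3 = (\<lambda>(w, z). elbo_int3 mw sw x w * qz z)"
  have T1: "integrable lborel T1" "integral\<^sup>L lborel T1 = integral\<^sup>L lborel (elbo_int1 mz sz dec x)"
    using lborel_pair.integrable_product_mult[OF qw(1) i1]
      lborel_pair.integral_product_mult[OF qw(1) i1] qw(2)
    by (simp_all add: T1_def lborel_prod)
  have T3: "integrable lborel T3" "integral\<^sup>L lborel T3 = integral\<^sup>L lborel (elbo_int3 mw sw x)"
    using lborel_pair.integrable_product_mult[OF i3 qz(1)]
      lborel_pair.integral_product_mult[OF i3 qz(1)] qz(2)
    by (simp_all add: T3_def lborel_prod)
  have F: "F = (\<lambda>q. T1 q - elbo_int2 K mz sz mw sw mb sb x q - T3 q - elbo_int4 K mz sz mw sw mb sb x q)"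
    by (auto simp: fun_eq_iff F_def T1_def T3_def qw_def qz_def elbo_integrands_eq[OF K adm])
  show "integrable lborel (\<lambda>q. F q)"
    unfolding F using T1 T3 i2 i4 by auto
  show "elbo K mz sz mw sw mb sb dec x = (\<integral>q. F q \<partial>lborel)"
    unfolding F using T1 T3 i2 i4 by (simp add: elbo_def)
qed

lemma sum_gmvae_joint_density:
  "(\<Sum>x\<in>UNIV. gmvae_joint_density K mb sb dec x q) = gmvae_prior_density K mb sb q"
  by (simp add: gmvae_joint_density_def sum_distrib_right[symmetric] sum_bern)

lemma gmvae_joint_density_integrable:
  fixes mb :: "nat \<Rightarrow> real^'w::finite \<Rightarrow> real^'z::finite" and dec :: "real^'z \<Rightarrow> real^'d::finite"
  assumes K: "1 \<le> K" and adm: "gmvae_admissible K mz sz mw sw mb sb dec"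
  shows "integrable lborel (gmvae_joint_density K mb sb dec x)"
proof (rule Bochner_Integration.integrable_bound)
  have sb: "\<forall>j<K. \<forall>w i. 0 < sb j w $ i"
    and meas: "\<forall>j<K. mb j \<in> borel_measurable borel \<and> sb j \<in> borel_measurable borel"
    and dec: "\<And>z. \<forall>i. 0 < dec z $ i \<and> dec z $ i < 1"
    and [measurable]: "dec \<in> borel_measurable borel"
    using adm by (auto simp: gmvae_admissible_def)
  have [measurable]: "gmvae_prior_density K mb sb \<in> borel_measurable (borel \<Otimes>\<^sub>M borel)"
    using borel_measurable_gmvae_prior_density[OF meas] by (simp add: borel_prod)
  show "integrable lborel (gmvae_prior_density K mb sb)"
    using gmvae_prior_density_integral[OF K sb meas] by simp
  have "gmvae_joint_density K mb sb dec x \<in> borel_measurable (borel \<Otimes>\<^sub>M borel)"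
    unfolding gmvae_joint_density_def[abs_def] by measurable
  then show "gmvae_joint_density K mb sb dec x \<in> borel_measurable lborel"
    by (simp add: borel_prod)
  show "AE q in lborel. norm (gmvae_joint_density K mb sb dec x q) \<le> norm (gmvae_prior_density K mb sb q)"
  proof (rule AE_I2)
    fix q
    have "0 < gmvae_prior_density K mb sb q" "0 < bern (dec (snd q)) x" "bern (dec (snd q)) x \<le> 1"
      using gmvae_prior_density_pos[OF K sb] bern_pos[OF dec] bern_le_1[OF dec] by auto
    then show "norm (gmvae_joint_density K mb sb dec x q) \<le> norm (gmvae_prior_density K mb sb q)"
      by (simp add: gmvae_joint_density_def abs_mult mult_left_le_one_le)
  qed
qed

lemma elbo_le_evidence:
  fixes mz :: "('d::finite \<Rightarrow> bool) \<Rightarrow> real^'z::finite" and mw :: "('d \<Rightarrow> bool) \<Rightarrow> real^'w::finite"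
  assumes K: "1 \<le> K" and adm: "gmvae_admissible K mz sz mw sw mb sb dec"
    and def: "gmvae_loss_defined K mz sz mw sw mb sb dec" and p: "0 < p"
  shows "p * elbo K mz sz mw sw mb sb dec x - p * ln p
    \<le> integral\<^sup>L lborel (gmvae_joint_density K mb sb dec x) - p"
proof -
  have sz: "\<forall>i. 0 < sz x $ i" and sw: "\<forall>i. 0 < sw x $ i"
    and sb: "\<forall>j<K. \<forall>w i. 0 < sb j w $ i" and dec: "\<And>z. \<forall>i. 0 < dec z $ i \<and> dec z $ i < 1"
    using adm by (auto simp: gmvae_admissible_def)
  have rec: "integrable lborel (recognition_density mz sz mw sw x)"
    "integral\<^sup>L lborel (recognition_density mz sz mw sw x) = 1"
    using lborel_pair.integrable_product_mult[OF integrable_gauss_diag[OF sw] integrable_gauss_diag[OF sz]]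
      lborel_pair.integral_product_mult[OF integrable_gauss_diag[OF sw] integrable_gauss_diag[OF sz]]
    by (simp_all add: recognition_density_def[abs_def] lborel_prod integral_gauss_diag sw sz)
  have pos: "0 < recognition_density mz sz mw sw x q" "0 < gmvae_joint_density K mb sb dec x q" for q
    using sz sw gmvae_prior_density_pos[OF K sb] bern_pos[OF dec]
    by (auto simp: recognition_density_def gmvae_joint_density_def gauss_diag_pos split: prod.split)
  have "elbo K mz sz mw sw mb sb dec x \<le> ln p + integral\<^sup>L lborel (gmvae_joint_density K mb sb dec x) / p - 1"
    unfolding elbo_eq_integral_ln_ratio(2)[OF K adm def]
    using rec gmvae_joint_density_integrable[OF K adm] elbo_eq_integral_ln_ratio(1)[OF K adm def] pos p
    by (rule integral_mult_ln_ratio_le)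
  then show ?thesis
    using p by (simp add: field_simps)
qed

lemma gmvae_loss_ge_entropy:
  fixes mux :: "real^'d::finite"
    and mz :: "('d \<Rightarrow> bool) \<Rightarrow> real^'z::finite" and mw :: "('d \<Rightarrow> bool) \<Rightarrow> real^'w::finite"
  assumes K: "1 \<le> K" and mux: "\<forall>i. 0 < mux $ i \<and> mux $ i < 1"
    and adm: "gmvae_admissible K mz sz mw sw mb sb dec"
    and def: "gmvae_loss_defined K mz sz mw sw mb sb dec"
  shows "- (\<Sum>x\<in>UNIV. bern mux x * ln (bern mux x)) \<le> gmvae_loss mux K mz sz mw sw mb sb dec"
proof -
  have sb: "\<forall>j<K. \<forall>w i. 0 < sb j w $ i"
    and meas: "\<forall>j<K. mb j \<in> borel_measurable borel \<and> sb j \<in> borel_measurable borel"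
    using adm by (auto simp: gmvae_admissible_def)
  have "(\<Sum>x\<in>UNIV. bern mux x * elbo K mz sz mw sw mb sb dec x - bern mux x * ln (bern mux x))
      \<le> (\<Sum>x\<in>UNIV. integral\<^sup>L lborel (gmvae_joint_density K mb sb dec x) - bern mux x)"
    using elbo_le_evidence[OF K adm def bern_pos[OF mux]] by (intro sum_mono)
  also have "\<dots> = (\<integral>q. (\<Sum>x\<in>UNIV. gmvae_joint_density K mb sb dec x q) \<partial>lborel) - 1"
    using gmvae_joint_density_integrable[OF K adm] by (simp add: sum_subtractf sum_bern)
  also have "\<dots> = integral\<^sup>L lborel (gmvae_prior_density K mb sb) - 1"
    by (simp add: sum_gmvae_joint_density)
  also have "\<dots> = 0"
    using gmvae_prior_density_integral(2)[OF K sb meas] by simp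
  finally show ?thesis
    by (simp add: gmvae_loss_def sum_subtractf)
qed

lemma post_v_const:
  assumes "1 \<le> K" "\<forall>i. 0 < s $ i"
  shows "post_v K (\<lambda>j w. m) (\<lambda>j w. s) j z w = 1 / real K"
proof -
  have "gauss_diag m s z \<noteq> 0"
    using gauss_diag_pos[OF assms(2)] by (metis less_irrefl)
  then show ?thesis
    using assms(1) by (simp add: post_v_eq)
qed

lemma gmvae_loss_const_witness:
  fixes mux :: "real^'d::finite" and m s :: "real^'z::finite"
  assumes K: "1 \<le> K" and mux: "\<forall>i. 0 < mux $ i \<and> mux $ i < 1" and s: "\<forall>i. 0 < s $ i"
  defines "mz \<equiv> \<lambda>x :: 'd \<Rightarrow> bool. m" and "sz \<equiv> \<lambda>x :: 'd \<Rightarrow> bool. s"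
    and "mw \<equiv> \<lambda>x :: 'd \<Rightarrow> bool. 0 :: real^'w::finite" and "sw \<equiv> \<lambda>x :: 'd \<Rightarrow> bool. 1 :: real^'w"
    and "mb \<equiv> \<lambda>(j :: nat) (w :: real^'w). m" and "sb \<equiv> \<lambda>(j :: nat) (w :: real^'w). s"
    and "dec \<equiv> \<lambda>z :: real^'z. mux"
  shows "gmvae_admissible K mz sz mw sw mb sb dec"
    and "gmvae_loss_defined K mz sz mw sw mb sb dec"
    and "gmvae_loss mux K mz sz mw sw mb sb dec = - (\<Sum>x\<in>UNIV. bern mux x * ln (bern mux x))"
proof -
  have int2: "elbo_int2 K mz sz mw sw mb sb x = (\<lambda>q. 0)"
    and int4: "elbo_int4 K mz sz mw sw mb sb x = (\<lambda>q. 0)" for x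
    using K gauss_diag_pos[OF s] by (auto simp: elbo_int2_def elbo_int4_def post_v_const[OF K s]
      mz_def sz_def mw_def sw_def mb_def sb_def)
  have int3: "elbo_int3 mw sw x = (\<lambda>w. 0)" for x
    using gauss_diag_pos[of "1 :: real^'w"] by (auto simp: elbo_int3_def mw_def sw_def)
  have int1: "elbo_int1 mz sz dec x = (\<lambda>z. gauss_diag m s z * ln (bern mux x))" for x
    by (simp add: elbo_int1_def mz_def sz_def dec_def)
  show "gmvae_admissible K mz sz mw sw mb sb dec"
    using s mux by (simp add: gmvae_admissible_def mz_def sz_def mw_def sw_def mb_def sb_def dec_def)
  show "gmvae_loss_defined K mz sz mw sw mb sb dec"
    using integrable_gauss_diag[OF s] by (simp add: gmvae_loss_defined_def int1 int2 int3 int4)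
  show "gmvae_loss mux K mz sz mw sw mb sb dec = - (\<Sum>x\<in>UNIV. bern mux x * ln (bern mux x))"
    using integral_gauss_diag[OF s] by (simp add: gmvae_loss_def elbo_def int1 int2 int3 int4)
qed

theorem proposition1:
  fixes mux :: "real^'d::finite" and K :: nat
  assumes "1 \<le> K" and "\<forall>i. 0 < mux $ i \<and> mux $ i < 1"
  shows "(\<forall>(mz :: ('d \<Rightarrow> bool) \<Rightarrow> real^'z::finite) sz (mw :: ('d \<Rightarrow> bool) \<Rightarrow> real^'w::finite) sw mb sb dec.
            gmvae_admissible K mz sz mw sw mb sb dec \<and> gmvae_loss_defined K mz sz mw sw mb sb dec \<longrightarrow>
            - (\<Sum>x\<in>UNIV. bern mux x * ln (bern mux x)) \<le> gmvae_loss mux K mz sz mw sw mb sb dec)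
       \<and> (\<forall>(muz :: real^'z) (sigz :: real^'z). (\<forall>i. 0 < sigz $ i) \<longrightarrow>
            (let mz = (\<lambda>x. muz); sz = (\<lambda>x. \<chi> i. (sigz $ i)^2);
                 mw = (\<lambda>x. 0 :: real^'w); sw = (\<lambda>x. 1 :: real^'w);
                 mb = (\<lambda>j w. muz); sb = (\<lambda>j w. \<chi> i. (sigz $ i)^2);
                 dec = (\<lambda>z. mux)
             in gmvae_admissible K mz sz mw sw mb sb dec \<and> gmvae_loss_defined K mz sz mw sw mb sb dec \<and>
                gmvae_loss mux K mz sz mw sw mb sb dec = - (\<Sum>x\<in>UNIV. bern mux x * ln (bern mux x))))"
proof (intro conjI allI impI)
  fix mz :: "('d \<Rightarrow> bool) \<Rightarrow> real^'z" and mw :: "('d \<Rightarrow> bool) \<Rightarrow> real^'w" and sz sw mb sb dec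
  assume "gmvae_admissible K mz sz mw sw mb sb dec \<and> gmvae_loss_defined K mz sz mw sw mb sb dec"
  then show "- (\<Sum>x\<in>UNIV. bern mux x * ln (bern mux x)) \<le> gmvae_loss mux K mz sz mw sw mb sb dec"
    using gmvae_loss_ge_entropy[OF assms] by blast
next
  fix muz sigz :: "real^'z"
  assume "\<forall>i. 0 < sigz $ i"
  then have "\<forall>i. 0 < (\<chi> i. (sigz $ i)^2 :: real^'z) $ i"
    by (simp add: less_imp_neq[symmetric])
  from gmvae_loss_const_witness[OF assms this, where m = muz and 'w = 'w]
  show "let mz = (\<lambda>x. muz); sz = (\<lambda>x. \<chi> i. (sigz $ i)^2);
            mw = (\<lambda>x. 0 :: real^'w); sw = (\<lambda>x. 1 :: real^'w);
            mb = (\<lambda>j w. muz); sb = (\<lambda>j w. \<chi> i. (sigz $ i)^2);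
            dec = (\<lambda>z. mux)
        in gmvae_admissible K mz sz mw sw mb sb dec \<and> gmvae_loss_defined K mz sz mw sw mb sb dec \<and>
           gmvae_loss mux K mz sz mw sw mb sb dec = - (\<Sum>x\<in>UNIV. bern mux x * ln (bern mux x))"
    unfolding Let_def by blast
qed

end
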